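(* Let $m\leqslant n$ be natural numbers. For $k\in\{1,\dots,2^m-1\}$ let $Q^k(n)=|\{s\in\{0,\dots,n-1\}: k_s=0\text{ and }b^k_{s+1}\neq 0\}|$. Then $$Q(m,n):=\sum_{k=1}^{2^m-1}Q^k(n)=2^m\left(n-\frac m2-1\right)-n+m+1.$$
   Context: For an integer $k\geqslant 0$, $k_i$ are its binary digits ($k=\sum_ik_i2^i$) and $b^k_{s}=k\bmod 2^s$ for $s\geqslant 0$. ($Q(m,n)$ is the number of multi-controlled gates used in the paper's column-by-column decomposition of an $m$ to $n$ isometry.) *)

theory Defs
  imports Complex_Main
begin

text \<open>Binary digit k_s of k and the residue b^k_s = k mod 2^s.\<close>
definition bdigit :: "nat \<Rightarrow> nat \<Rightarrow> nat" where
  "bdigit k s = (k div 2 ^ s) mod 2"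

definition bres :: "nat \<Rightarrow> nat \<Rightarrow> nat" where
  "bres k s = k mod 2 ^ s"

definition Qk :: "nat \<Rightarrow> nat \<Rightarrow> nat" where
  "Qk k n = card {s \<in> {0..<n}. bdigit k s = 0 \<and> bres k (s + 1) \<noteq> 0}"

definition Q :: "nat \<Rightarrow> nat \<Rightarrow> nat" where
  "Q m n = (\<Sum>k = 1..2 ^ m - 1. Qk k n)"

end

theory Submission
  imports Defs
begin

text \<open>Exchanging the two sums, Q m n counts pairs (k, s). For a fixed position s, the condition
  on k depends only on r = k mod 2^(s+1) and says 0 < r < 2^s. Among k < 2^m this happens
  2^(m-s-1) (2^s - 1) times when s < m, by periodicity, and 2^m - 1 times when s \<ge> m, since
  then r = k.\<close>

lemma sum_mod_periodic:
  fixes g :: "nat \<Rightarrow> 'a::semiring_1"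
  shows "(\<Sum>k<d * N. g (k mod N)) = of_nat d * (\<Sum>r<N. g r)"
proof -
  have block: "(\<Sum>k\<in>{i * N..<i * N + N}. g (k mod N)) = (\<Sum>r<N. g r)" for i
    using sum.shift_bounds_nat_ivl[of "\<lambda>k. g (k mod N)" 0 "i * N" N]
    by (simp add: atLeast0LessThan add.commute)
  show ?thesis
    using sum.nat_group[of "\<lambda>k. g (k mod N)" N d] by (simp add: block)
qed

lemma bdigit_zero_bres_nonzero_iff:
  "(bdigit k s = 0 \<and> bres k (s + 1) \<noteq> 0) \<longleftrightarrow> k mod 2 ^ (s + 1) \<in> {0<..<2 ^ s}"
proof -
  have "k mod 2 ^ (s + 1) = 2 ^ s * bdigit k s + k mod 2 ^ s"
    unfolding bdigit_def using mod_mult2_eq[of k "2 ^ s" 2] by (simp add: mult.commute)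
  moreover have "k mod 2 ^ s < 2 ^ s" by simp
  moreover have "bdigit k s \<in> {0, 1}" unfolding bdigit_def by auto
  ultimately show ?thesis unfolding bres_def by auto
qed

lemma Q_eq_sum_card_mod_window:
  "Q m n = (\<Sum>s<n. card {k::nat. k < 2 ^ m \<and> k mod 2 ^ (s + 1) \<in> {0<..<2 ^ s}})"
proof -
  let ?P = "\<lambda>k s. k mod 2 ^ (s + 1) \<in> {0<..<(2::nat) ^ s}"
  have Qk_eq: "Qk k n = (\<Sum>s<n. of_bool (?P k s))" for k
    unfolding Qk_def bdigit_zero_bres_nonzero_iff
    by (simp add: atLeast0LessThan Collect_conj_eq lessThan_def)
  have "{..<(2::nat) ^ m} = insert 0 {1..2 ^ m - 1}" by auto
  then have "Q m n = (\<Sum>k<2 ^ m. Qk k n)"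
    by (simp add: Q_def Qk_eq)
  also have "\<dots> = (\<Sum>s<n. \<Sum>k<2 ^ m. of_bool (?P k s))"
    unfolding Qk_eq by (rule sum.swap)
  finally show ?thesis by (simp add: Collect_conj_eq lessThan_def)
qed

lemma card_mod_window:
  "card {k::nat. k < 2 ^ m \<and> k mod 2 ^ (s + 1) \<in> {0<..<2 ^ s}} =
     (if s < m then 2 ^ (m - s - 1) * (2 ^ s - 1) else 2 ^ m - 1)"
proof (cases "s < m")
  case True
  then have "m = (m - s - 1) + (s + 1)" by simp
  then have "(2::nat) ^ m = 2 ^ (m - s - 1) * 2 ^ (s + 1)"
    by (metis power_add)
  have "(\<Sum>r<2 ^ (s + 1). of_bool (r \<in> {0<..<(2::nat) ^ s})) = (2 ^ s - 1 :: nat)"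
  proof -
    have "{..<2 ^ (s + 1)} \<inter> {r. r \<in> {0<..<(2::nat) ^ s}} = {0<..<2 ^ s}" by auto
    then show ?thesis by (subst sum_of_bool_eq) simp_all
  qed
  then have "(\<Sum>k::nat<2 ^ (m - s - 1) * 2 ^ (s + 1). of_bool (k mod 2 ^ (s + 1) \<in> {0<..<2 ^ s})) =
             2 ^ (m - s - 1) * (2 ^ s - 1 :: nat)"
    using sum_mod_periodic[where g = "\<lambda>r. of_bool (r \<in> {0<..<2 ^ s}) :: nat" and d = "2 ^ (m - s - 1)"
        and N = "2 ^ (s + 1)"]
    by simp
  then show ?thesis using True \<open>2 ^ m = _\<close> by (simp add: Collect_conj_eq lessThan_def)
next
  case False
  then have below: "k < 2 ^ s" if "k < 2 ^ m" for k :: nat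
    using that power_increasing[of m s "2::nat"] False by linarith
  then have "k mod 2 ^ (s + 1) = k" if "k < 2 ^ m" for k :: nat
    using below[OF that] by simp
  then have "{k::nat. k < 2 ^ m \<and> k mod 2 ^ (s + 1) \<in> {0<..<2 ^ s}} = {0<..<2 ^ m}"
    using below by (auto simp del: power_Suc)
  then show ?thesis using False by simp
qed

lemma sum_pow2_mult_pow2_minus_one:
  "(\<Sum>s<m. 2 ^ (m - s - 1) * (2 ^ s - 1) :: real) = real m * 2 ^ m / 2 - 2 ^ m + 1"
proof (induction m)
  case 0
  then show ?case by simp
next
  case (Suc m)
  have "(\<Sum>s<m. 2 ^ (Suc m - s - 1) * (2 ^ s - 1) :: real) =
        2 * (\<Sum>s<m. 2 ^ (m - s - 1) * (2 ^ s - 1))"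
    unfolding sum_distrib_left
    by (rule sum.cong) (auto simp: Suc_diff_Suc simp flip: power_Suc)
  with Suc show ?case by (simp add: field_simps)
qed

theorem corollary1:
  fixes m n :: nat
  assumes "m \<le> n"
  shows "real (Q m n) = 2 ^ m * (real n - real m / 2 - 1) - real n + real m + 1"
proof -
  have "Q m n = (\<Sum>s<n. if s < m then 2 ^ (m - s - 1) * (2 ^ s - 1) else 2 ^ m - 1)"
    by (simp only: Q_eq_sum_card_mod_window card_mod_window)
  also have "\<dots> = (\<Sum>s<m. if s < m then 2 ^ (m - s - 1) * (2 ^ s - 1) else 2 ^ m - 1)
                    + (\<Sum>s = m..<n. if s < m then 2 ^ (m - s - 1) * (2 ^ s - 1) else 2 ^ m - 1)"
    by (rule sum.atLeastLessThan_concat[OF le0 assms, symmetric, unfolded atLeast0LessThan])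
  also have "\<dots> = (\<Sum>s<m. 2 ^ (m - s - 1) * (2 ^ s - 1)) + (\<Sum>s = m..<n. 2 ^ m - 1)"
    by (intro arg_cong2[where f = "(+)"] sum.cong) auto
  finally have "real (Q m n) =
      (\<Sum>s<m. 2 ^ (m - s - 1) * (2 ^ s - 1) :: real) + (real n - real m) * (2 ^ m - 1)"
    using assms by (simp add: of_nat_diff)
  then show ?thesis
    unfolding sum_pow2_mult_pow2_minus_one by (simp add: field_simps)
qed

end
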